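(* Let $\beta > 0$ be fixed. There is a constant $C$ such that for all $\alpha > 0$, $\tau > 0$, and every $u \in \mathrm{H}^1(\mathbb{R})$ that is continuous and affine on each interval $[k\tau,(k+1)\tau]$, $k \in \mathbb{Z}$, the upwinded interpolant $v$ of $u$ satisfies $$\alpha \int_{\mathbb{R}} | \dot v|^2 \leq C\left( |u|_{\mathrm{H}^{1/2}}^2 + \alpha \int_{\mathbb{R}} | \dot u |^2\right).$$
   Context: The upwinded interpolant of a continuous $u$ is the unique continuous function $v$ with $v(k\tau) = u(k\tau)$ for all $k \in \mathbb{Z}$ and which on each $[k\tau,(k+1)\tau]$ is of the form $c_1 + c_2\exp(-\beta t/\alpha)$ for constants $c_1,c_2$. A dot denotes the derivative. $|u|_{\mathrm{H}^{1/2}}$ is the $\mathrm{H}^{1/2}(\mathbb{R})$ seminorm (Slobodetski or, equivalently, Fourier seminorm). *)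

theory Defs
  imports "HOL-Analysis.Analysis"
begin

definition piecewise_affine_grid :: "real \<Rightarrow> (real \<Rightarrow> real) \<Rightarrow> bool" where
  "piecewise_affine_grid \<tau> u \<longleftrightarrow> continuous_on UNIV u \<and>
     (\<forall>k::int. \<exists>a b. \<forall>t\<in>{real_of_int k * \<tau> .. (real_of_int k + 1) * \<tau>}. u t = a + b * t)"

definition L2_sq :: "(real \<Rightarrow> real) \<Rightarrow> ennreal" where
  "L2_sq f = (\<integral>\<^sup>+ t. ennreal ((f t)\<^sup>2) \<partial>lborel)"

text \<open>Membership in H^1(R) (u and its derivative square integrable); for continuous
  piecewise affine u the classical derivative (defined off the grid) is the weak derivative.\<close>
definition in_H1 :: "(real \<Rightarrow> real) \<Rightarrow> bool" where
  "in_H1 u \<longleftrightarrow> u \<in> borel_measurable lborel \<and> L2_sq u < \<infinity> \<and> L2_sq (deriv u) < \<infinity>"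

definition H12_seminorm_sq :: "(real \<Rightarrow> real) \<Rightarrow> ennreal" where
  "H12_seminorm_sq u = (\<integral>\<^sup>+ x. \<integral>\<^sup>+ y. ennreal ((u x - u y)\<^sup>2 / (x - y)\<^sup>2) \<partial>lborel \<partial>lborel)"

definition upwinded_interpolant ::
  "real \<Rightarrow> real \<Rightarrow> real \<Rightarrow> (real \<Rightarrow> real) \<Rightarrow> (real \<Rightarrow> real) \<Rightarrow> bool" where
  "upwinded_interpolant \<alpha> \<beta> \<tau> u v \<longleftrightarrow> continuous_on UNIV v \<and>
     (\<forall>k::int. v (real_of_int k * \<tau>) = u (real_of_int k * \<tau>)) \<and>
     (\<forall>k::int. \<exists>c1 c2. \<forall>t\<in>{real_of_int k * \<tau> .. (real_of_int k + 1) * \<tau>}.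
        v t = c1 + c2 * exp (- \<beta> * t / \<alpha>))"

end

theory Submission
  imports Defs "HOL-Library.Nat_Bijection"
begin

text \<open>On a grid cell [a, b] of length \<tau> the interpolant is v = c1 + c2 exp (-\<beta> t / \<alpha>),
  so \<alpha> \<integral> v'^2 over the cell is explicit, and exp (\<beta> \<tau> / \<alpha>) \<ge> 1 + \<beta> \<tau> / \<alpha> bounds
  it by (\<beta>/2) d^2 + \<alpha> d^2 / \<tau>, where d = u b - u a. The second term is \<alpha> \<integral> u'^2 over
  the cell. For the first, if u has slope B on the cell, then for every x in the cell the
  inner Slobodetski integral over y in the same cell is already B^2 \<tau>, so d^2 = B^2 \<tau>^2 is
  dominated by the part of the H^(1/2) seminorm with x in that cell. Summing over the cells
  gives the estimate with C = max 1 (\<beta>/2).\<close>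

definition grid_cell :: "real \<Rightarrow> int \<Rightarrow> real set" where
  "grid_cell \<tau> k = {real_of_int k * \<tau> <..< (real_of_int k + 1) * \<tau>}"

lemma grid_cell_floor:
  assumes "\<tau> > 0" "t \<in> grid_cell \<tau> k"
  shows "\<lfloor>t / \<tau>\<rfloor> = k"
  using assms by (auto simp: grid_cell_def floor_eq_iff field_simps)

lemma in_grid_cell_floor:
  assumes "\<tau> > 0" "t \<notin> range (\<lambda>k::int. real_of_int k * \<tau>)"
  shows "t \<in> grid_cell \<tau> \<lfloor>t / \<tau>\<rfloor>"
proof -
  have "real_of_int \<lfloor>t / \<tau>\<rfloor> * \<tau> \<le> t" "t < (real_of_int \<lfloor>t / \<tau>\<rfloor> + 1) * \<tau>"
    using floor_divide_lower floor_divide_upper assms(1) by blast+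
  moreover have "real_of_int \<lfloor>t / \<tau>\<rfloor> * \<tau> \<noteq> t"
    using assms(2) by (metis rangeI)
  ultimately show ?thesis by (simp add: grid_cell_def)
qed

lemma AE_off_grid: "AE t in lborel. t \<notin> range (\<lambda>k::int. real_of_int k * \<tau>)"
  by (rule AE_not_in[OF countable_imp_null_set_lborel]) simp

lemma disjoint_family_grid_cells:
  assumes "\<tau> > 0"
  shows "disjoint_family (\<lambda>n. grid_cell \<tau> (int_decode n))"
  unfolding disjoint_family_on_def
proof (intro ballI impI)
  fix m n :: nat
  assume "m \<noteq> n"
  then have "int_decode m \<noteq> int_decode n"
    using inj_int_decode by (auto dest: injD)
  then show "grid_cell \<tau> (int_decode m) \<inter> grid_cell \<tau> (int_decode n) = {}"
    using grid_cell_floor[OF assms] by (metis disjoint_iff)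
qed

lemma nn_integral_grid_cells:
  assumes "\<tau> > 0" "f \<in> borel_measurable lborel"
  shows "(\<integral>\<^sup>+t. f t \<partial>lborel) = (\<Sum>n. \<integral>\<^sup>+t\<in>grid_cell \<tau> (int_decode n). f t \<partial>lborel)"
proof -
  have "AE t in lborel. t \<in> (\<Union>n. grid_cell \<tau> (int_decode n))"
    using AE_off_grid[of \<tau>]
  proof eventually_elim
    case (elim t)
    then show ?case
      using in_grid_cell_floor[OF assms(1)] surj_int_decode by (metis UNIV_I UN_I surj_def)
  qed
  then have "(\<integral>\<^sup>+t. f t \<partial>lborel) = (\<integral>\<^sup>+t\<in>(\<Union>n. grid_cell \<tau> (int_decode n)). f t \<partial>lborel)"
    by (intro nn_integral_cong_AE) auto
  also have "\<dots> = (\<Sum>n. \<integral>\<^sup>+t\<in>grid_cell \<tau> (int_decode n). f t \<partial>lborel)"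
    using assms disjoint_family_grid_cells
    by (intro nn_integral_disjoint_family) (auto simp: grid_cell_def)
  finally show ?thesis .
qed

lemma nn_integral_mono_grid_cells:
  assumes "\<tau> > 0" "f \<in> borel_measurable lborel" "g \<in> borel_measurable lborel"
    and "\<And>k. (\<integral>\<^sup>+t\<in>grid_cell \<tau> k. f t \<partial>lborel) \<le> (\<integral>\<^sup>+t\<in>grid_cell \<tau> k. g t \<partial>lborel)"
  shows "(\<integral>\<^sup>+t. f t \<partial>lborel) \<le> (\<integral>\<^sup>+t. g t \<partial>lborel)"
  unfolding nn_integral_grid_cells[OF assms(1,2)] nn_integral_grid_cells[OF assms(1,3)]
  by (intro suminf_le assms(4)) auto

lemma borel_measurable_grid_piecewise:
  fixes f :: "real \<Rightarrow> real"
  assumes "\<tau> > 0" "\<And>k t. t \<in> grid_cell \<tau> k \<Longrightarrow> f t = g k t"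
    and "\<And>k. g k \<in> borel_measurable borel"
  shows "f \<in> borel_measurable borel"
proof (rule measurable_discrete_difference)
  show "(\<lambda>t. g \<lfloor>t / \<tau>\<rfloor> t) \<in> borel_measurable borel"
    by (rule measurable_compose_countable[OF assms(3)]) measurable
  show "countable (range (\<lambda>k::int. real_of_int k * \<tau>))" by simp
  show "g \<lfloor>t / \<tau>\<rfloor> t = f t" if "t \<notin> range (\<lambda>k::int. real_of_int k * \<tau>)" for t
    using assms(2) in_grid_cell_floor[OF assms(1) that] by simp
qed auto

lemma deriv_eq_on_interval:
  fixes f g :: "real \<Rightarrow> real"
  assumes "\<forall>t\<in>{a..b}. f t = g t" "(g has_real_derivative D) (at t)" "t \<in> {a<..<b}"
  shows "deriv f t = D"
proof (rule DERIV_imp_deriv)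
  show "(f has_real_derivative D) (at t)"
    by (rule has_field_derivative_transform_within_open[OF assms(2), of "{a<..<b}"])
       (use assms in auto)
qed

lemma nn_integral_affine_deriv_sq:
  fixes u :: "real \<Rightarrow> real"
  assumes "\<forall>t\<in>{a..b}. u t = A + B * t" "a \<le> b"
  shows "(\<integral>\<^sup>+t\<in>{a<..<b}. ennreal ((deriv u t)\<^sup>2) \<partial>lborel) = ennreal (B\<^sup>2 * (b - a))"
proof -
  have "deriv u t = B" if "t \<in> {a<..<b}" for t
    by (rule deriv_eq_on_interval[OF assms(1) _ that]) (auto intro!: derivative_eq_intros)
  then have "(\<integral>\<^sup>+t\<in>{a<..<b}. ennreal ((deriv u t)\<^sup>2) \<partial>lborel)
      = (\<integral>\<^sup>+t. ennreal (B\<^sup>2) * indicator {a<..<b} t \<partial>lborel)"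
    by (intro nn_integral_cong) (auto simp: indicator_def)
  then show ?thesis
    using assms(2) by (simp add: nn_integral_cmult_indicator ennreal_mult)
qed

lemma affine_slope_sq_le_H12_density:
  fixes u :: "real \<Rightarrow> real"
  assumes "\<forall>t\<in>{a..b}. u t = A + B * t" "x \<in> {a<..<b}"
  shows "ennreal (B\<^sup>2 * (b - a)) \<le> (\<integral>\<^sup>+y. ennreal ((u x - u y)\<^sup>2 / (x - y)\<^sup>2) \<partial>lborel)"
proof -
  have "ennreal (B\<^sup>2 * (b - a)) = (\<integral>\<^sup>+y. ennreal (B\<^sup>2) * indicator {a<..<b} y \<partial>lborel)"
    using assms(2) by (simp add: nn_integral_cmult_indicator ennreal_mult)
  also have "\<dots> \<le> (\<integral>\<^sup>+y. ennreal ((u x - u y)\<^sup>2 / (x - y)\<^sup>2) \<partial>lborel)"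
  proof (rule nn_integral_mono_AE)
    show "AE y in lborel. ennreal (B\<^sup>2) * indicator {a<..<b} y \<le> ennreal ((u x - u y)\<^sup>2 / (x - y)\<^sup>2)"
      using AE_lborel_singleton[of x]
    proof eventually_elim
      case (elim y)
      show ?case
      proof (cases "y \<in> {a<..<b}")
        case True
        then have "u x - u y = B * (x - y)"
          using assms by (auto simp: algebra_simps)
        then show ?thesis
          using True elim by (simp add: power_mult_distrib)
      qed simp
    qed
  qed
  finally show ?thesis .
qed

lemma exp_energy_le_increment:
  fixes \<alpha> \<beta> a b c :: real
  assumes "\<alpha> > 0" "\<beta> > 0" "a < b"
  defines "p \<equiv> exp (- \<beta> * a / \<alpha>)" and "q \<equiv> exp (- \<beta> * b / \<alpha>)"
  shows "c\<^sup>2 * \<beta> * (p\<^sup>2 - q\<^sup>2) / 2 \<le> \<beta> / 2 * (c * (q - p))\<^sup>2 + \<alpha> * (c * (q - p))\<^sup>2 / (b - a)"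
proof -
  have "p = q * exp (\<beta> * (b - a) / \<alpha>)"
    using assms(1) unfolding p_def q_def by (simp add: exp_add[symmetric] field_simps)
  then have "p - q \<ge> q * (\<beta> * (b - a) / \<alpha>)"
    using mult_left_mono[OF exp_ge_add_one_self, of q "\<beta> * (b - a) / \<alpha>"]
    unfolding q_def by (simp add: algebra_simps)
  moreover have "q * (\<beta> * (b - a) / \<alpha>) \<ge> 0"
    using assms(1-3) unfolding q_def by simp
  ultimately have "p - q \<ge> 0" "\<alpha> * (p - q) / (b - a) \<ge> \<beta> * q"
    using assms(1,3) by (linarith, simp add: field_simps)
  then have "c\<^sup>2 * (p - q) * (\<alpha> * (p - q) / (b - a) - \<beta> * q) \<ge> 0"
    by simp
  moreover have "\<beta> / 2 * (c * (q - p))\<^sup>2 + \<alpha> * (c * (q - p))\<^sup>2 / (b - a) - c\<^sup>2 * \<beta> * (p\<^sup>2 - q\<^sup>2) / 2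
      = c\<^sup>2 * (p - q) * (\<alpha> * (p - q) / (b - a) - \<beta> * q)"
    by (simp add: field_simps power2_eq_square)
  ultimately show ?thesis by linarith
qed

lemma exp_profile_energy_le:
  fixes v :: "real \<Rightarrow> real"
  assumes "\<alpha> > 0" "\<beta> > 0" "a < b"
    and v: "\<forall>t\<in>{a..b}. v t = c1 + c2 * exp (- \<beta> * t / \<alpha>)"
  shows "ennreal \<alpha> * (\<integral>\<^sup>+t\<in>{a<..<b}. ennreal ((deriv v t)\<^sup>2) \<partial>lborel)
           \<le> ennreal (\<beta> / 2 * (v b - v a)\<^sup>2 + \<alpha> * (v b - v a)\<^sup>2 / (b - a))"
proof -
  define D where "D t = c2 * (exp (- \<beta> * t / \<alpha>) * (- \<beta> / \<alpha>))" for t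
  define P where "P t = - (c2\<^sup>2 * \<beta> / (2 * \<alpha>)) * (exp (- \<beta> * t / \<alpha>))\<^sup>2" for t
  have "(P has_real_derivative (D t)\<^sup>2) (at t)" for t
    unfolding P_def D_def using assms(1)
    by (auto intro!: derivative_eq_intros simp: field_simps power2_eq_square)
  then have "((\<lambda>t. (D t)\<^sup>2) has_integral P b - P a) {a..b}"
    using assms(3)
    by (intro fundamental_theorem_of_calculus)
       (auto simp: has_real_derivative_iff_has_vector_derivative intro: has_vector_derivative_at_within)
  then have "((\<lambda>t. if t \<in> {a..b} then (D t)\<^sup>2 else 0) has_integral P b - P a) UNIV"
    by (simp only: has_integral_restrict_UNIV)
  also have "(\<lambda>t. if t \<in> {a..b} then (D t)\<^sup>2 else 0) = (\<lambda>t. (D t)\<^sup>2 * indicator {a..b} t)"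
    by (auto simp: indicator_def)
  finally have "((\<lambda>t. (D t)\<^sup>2 * indicator {a..b} t) has_integral P b - P a) UNIV" .
  moreover have "(\<lambda>t. (D t)\<^sup>2 * indicator {a..b} t) \<in> borel_measurable borel"
    unfolding D_def by measurable
  ultimately have energy: "(\<integral>\<^sup>+t. ennreal ((D t)\<^sup>2 * indicator {a..b} t) \<partial>lborel) = ennreal (P b - P a)"
    by (intro nn_integral_has_integral_lborel) auto
  have "deriv v t = D t" if "t \<in> {a<..<b}" for t
    unfolding D_def by (rule deriv_eq_on_interval[OF v _ that]) (use assms(1) in \<open>auto intro!: derivative_eq_intros\<close>)
  then have "(\<integral>\<^sup>+t\<in>{a<..<b}. ennreal ((deriv v t)\<^sup>2) \<partial>lborel)
      \<le> (\<integral>\<^sup>+t. ennreal ((D t)\<^sup>2 * indicator {a..b} t) \<partial>lborel)"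
    by (intro nn_integral_mono) (auto simp: indicator_def)
  then have "ennreal \<alpha> * (\<integral>\<^sup>+t\<in>{a<..<b}. ennreal ((deriv v t)\<^sup>2) \<partial>lborel)
      \<le> ennreal \<alpha> * ennreal (P b - P a)"
    unfolding energy by (rule mult_left_mono) simp
  also have "\<dots> = ennreal (\<alpha> * (P b - P a))"
    using assms(1) by (simp add: ennreal_mult')
  also have "\<alpha> * (P b - P a) \<le> \<beta> / 2 * (v b - v a)\<^sup>2 + \<alpha> * (v b - v a)\<^sup>2 / (b - a)"
  proof -
    have increment: "v b - v a = c2 * (exp (- \<beta> * b / \<alpha>) - exp (- \<beta> * a / \<alpha>))"
      using v assms(3) by (simp add: algebra_simps)
    have P_increment: "\<alpha> * (P b - P a)
        = c2\<^sup>2 * \<beta> * ((exp (- \<beta> * a / \<alpha>))\<^sup>2 - (exp (- \<beta> * b / \<alpha>))\<^sup>2) / 2"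
      unfolding P_def using assms(1) by (simp add: field_simps)
    show ?thesis
      unfolding increment P_increment by (rule exp_energy_le_increment[OF assms(1-3)])
  qed
  finally show ?thesis
    by (simp add: ennreal_leI)
qed

lemma borel_measurable_H12_density:
  fixes u :: "real \<Rightarrow> real"
  assumes [measurable]: "u \<in> borel_measurable borel"
  shows "(\<lambda>x. \<integral>\<^sup>+y. ennreal ((u x - u y)\<^sup>2 / (x - y)\<^sup>2) \<partial>lborel) \<in> borel_measurable borel"
  by measurable

lemma upwinded_cell_energy_le:
  fixes u v :: "real \<Rightarrow> real"
  assumes "\<alpha> > 0" "\<beta> > 0" "a < b"
    and [measurable]: "u \<in> borel_measurable borel" "deriv u \<in> borel_measurable borel"
      "deriv v \<in> borel_measurable borel"
    and u: "\<forall>t\<in>{a..b}. u t = A + B * t"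
    and v: "\<forall>t\<in>{a..b}. v t = c1 + c2 * exp (- \<beta> * t / \<alpha>)"
    and "v a = u a" "v b = u b"
  defines "H x \<equiv> \<integral>\<^sup>+y. ennreal ((u x - u y)\<^sup>2 / (x - y)\<^sup>2) \<partial>lborel"
  shows "(\<integral>\<^sup>+t\<in>{a<..<b}. ennreal \<alpha> * ennreal ((deriv v t)\<^sup>2) \<partial>lborel)
           \<le> (\<integral>\<^sup>+t\<in>{a<..<b}. ennreal (\<beta> / 2) * H t + ennreal \<alpha> * ennreal ((deriv u t)\<^sup>2) \<partial>lborel)"
proof -
  have [measurable]: "H \<in> borel_measurable borel"
    unfolding H_def by (rule borel_measurable_H12_density) measurable
  have increment: "(v b - v a)\<^sup>2 = B\<^sup>2 * (b - a) * (b - a)"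
    using u assms(3,9,10) by (simp add: algebra_simps power2_eq_square)
  have "ennreal (B\<^sup>2 * (b - a) * (b - a)) = (\<integral>\<^sup>+t\<in>{a<..<b}. ennreal (B\<^sup>2 * (b - a)) \<partial>lborel)"
    using assms(3) by (simp add: nn_integral_cmult_indicator ennreal_mult')
  also have "\<dots> \<le> (\<integral>\<^sup>+t\<in>{a<..<b}. H t \<partial>lborel)"
    unfolding H_def using affine_slope_sq_le_H12_density[OF u]
    by (intro nn_integral_mono) (simp add: indicator_def)
  finally have H_bound: "ennreal (B\<^sup>2 * (b - a) * (b - a)) \<le> (\<integral>\<^sup>+t\<in>{a<..<b}. H t \<partial>lborel)" .
  have "(\<integral>\<^sup>+t\<in>{a<..<b}. ennreal \<alpha> * ennreal ((deriv v t)\<^sup>2) \<partial>lborel)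
      = ennreal \<alpha> * (\<integral>\<^sup>+t\<in>{a<..<b}. ennreal ((deriv v t)\<^sup>2) \<partial>lborel)"
    by (simp add: nn_integral_cmult mult.assoc)
  also have "\<dots> \<le> ennreal (\<beta> / 2 * (v b - v a)\<^sup>2 + \<alpha> * (v b - v a)\<^sup>2 / (b - a))"
    by (rule exp_profile_energy_le[OF assms(1-3) v])
  also have "\<dots> = ennreal (\<beta> / 2) * ennreal (B\<^sup>2 * (b - a) * (b - a)) + ennreal \<alpha> * ennreal (B\<^sup>2 * (b - a))"
    unfolding increment using assms(1-3) by (simp add: ennreal_plus ennreal_mult'[symmetric])
  also have "\<dots> \<le> ennreal (\<beta> / 2) * (\<integral>\<^sup>+t\<in>{a<..<b}. H t \<partial>lborel)
      + ennreal \<alpha> * (\<integral>\<^sup>+t\<in>{a<..<b}. ennreal ((deriv u t)\<^sup>2) \<partial>lborel)"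
    unfolding nn_integral_affine_deriv_sq[OF u less_imp_le[OF assms(3)]]
    by (intro add_mono mult_left_mono H_bound) auto
  also have "\<dots> = (\<integral>\<^sup>+t\<in>{a<..<b}. ennreal (\<beta> / 2) * H t + ennreal \<alpha> * ennreal ((deriv u t)\<^sup>2) \<partial>lborel)"
    by (simp add: nn_integral_add nn_integral_cmult distrib_right mult.assoc)
  finally show ?thesis .
qed

lemma upwinded_energy_le:
  fixes u v :: "real \<Rightarrow> real"
  assumes "\<alpha> > 0" "\<beta> > 0" "\<tau> > 0"
    and "piecewise_affine_grid \<tau> u" "upwinded_interpolant \<alpha> \<beta> \<tau> u v"
  shows "ennreal \<alpha> * L2_sq (deriv v) \<le> ennreal (\<beta> / 2) * H12_seminorm_sq u + ennreal \<alpha> * L2_sq (deriv u)"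
proof -
  obtain A B :: "int \<Rightarrow> real"
    where u: "\<And>k. \<forall>t\<in>{real_of_int k * \<tau> .. (real_of_int k + 1) * \<tau>}. u t = A k + B k * t"
    using assms(4) unfolding piecewise_affine_grid_def by metis
  obtain c1 c2 :: "int \<Rightarrow> real"
    where v: "\<And>k. \<forall>t\<in>{real_of_int k * \<tau> .. (real_of_int k + 1) * \<tau>}. v t = c1 k + c2 k * exp (- \<beta> * t / \<alpha>)"
    using assms(5) unfolding upwinded_interpolant_def by metis
  have interp: "\<And>k. v (real_of_int k * \<tau>) = u (real_of_int k * \<tau>)"
    using assms(5) unfolding upwinded_interpolant_def by blast
  define H where "H x = (\<integral>\<^sup>+y. ennreal ((u x - u y)\<^sup>2 / (x - y)\<^sup>2) \<partial>lborel)" for x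
  have [measurable]: "u \<in> borel_measurable borel"
    using assms(4) unfolding piecewise_affine_grid_def by (auto intro: borel_measurable_continuous_onI)
  have [measurable]: "H \<in> borel_measurable borel"
    unfolding H_def by (rule borel_measurable_H12_density) measurable
  have [measurable]: "deriv u \<in> borel_measurable borel"
  proof (rule borel_measurable_grid_piecewise[OF assms(3)])
    show "deriv u t = B k" if "t \<in> grid_cell \<tau> k" for k t
      using that unfolding grid_cell_def
      by (intro deriv_eq_on_interval[OF u]) (auto intro!: derivative_eq_intros)
  qed simp
  have [measurable]: "deriv v \<in> borel_measurable borel"
  proof (rule borel_measurable_grid_piecewise[OF assms(3)])
    show "deriv v t = c2 k * (exp (- \<beta> * t / \<alpha>) * (- \<beta> / \<alpha>))" if "t \<in> grid_cell \<tau> k" for k t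
      using that assms(1) unfolding grid_cell_def
      by (intro deriv_eq_on_interval[OF v]) (auto intro!: derivative_eq_intros)
  qed simp
  have "ennreal \<alpha> * L2_sq (deriv v) = (\<integral>\<^sup>+t. ennreal \<alpha> * ennreal ((deriv v t)\<^sup>2) \<partial>lborel)"
    unfolding L2_sq_def by (simp add: nn_integral_cmult)
  also have "\<dots> \<le> (\<integral>\<^sup>+t. ennreal (\<beta> / 2) * H t + ennreal \<alpha> * ennreal ((deriv u t)\<^sup>2) \<partial>lborel)"
  proof (rule nn_integral_mono_grid_cells[OF assms(3)])
    fix k
    have "v ((real_of_int k + 1) * \<tau>) = u ((real_of_int k + 1) * \<tau>)"
      using interp[of "k + 1"] by simp
    then show "(\<integral>\<^sup>+t\<in>grid_cell \<tau> k. ennreal \<alpha> * ennreal ((deriv v t)\<^sup>2) \<partial>lborel)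
        \<le> (\<integral>\<^sup>+t\<in>grid_cell \<tau> k. ennreal (\<beta> / 2) * H t + ennreal \<alpha> * ennreal ((deriv u t)\<^sup>2) \<partial>lborel)"
      unfolding grid_cell_def H_def using assms(1-3)
      by (intro upwinded_cell_energy_le[OF _ _ _ _ _ _ u v interp]) simp_all
  qed measurable
  also have "\<dots> = ennreal (\<beta> / 2) * H12_seminorm_sq u + ennreal \<alpha> * L2_sq (deriv u)"
    unfolding H12_seminorm_sq_def L2_sq_def H_def by (simp add: nn_integral_add nn_integral_cmult)
  finally show ?thesis .
qed

theorem proposition13:
  fixes \<beta> :: real
  assumes "\<beta> > 0"
  shows "\<exists>C::real. \<forall>\<alpha> \<tau> u v. \<alpha> > 0 \<longrightarrow> \<tau> > 0 \<longrightarrow> in_H1 u \<longrightarrow>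
           piecewise_affine_grid \<tau> u \<longrightarrow> upwinded_interpolant \<alpha> \<beta> \<tau> u v \<longrightarrow>
           ennreal \<alpha> * L2_sq (deriv v)
             \<le> ennreal C * (H12_seminorm_sq u + ennreal \<alpha> * L2_sq (deriv u))"
proof (intro exI allI impI)
  fix \<alpha> \<tau> :: real and u v :: "real \<Rightarrow> real"
  assume "\<alpha> > 0" "\<tau> > 0" "piecewise_affine_grid \<tau> u" "upwinded_interpolant \<alpha> \<beta> \<tau> u v"
  then have "ennreal \<alpha> * L2_sq (deriv v) \<le> ennreal (\<beta> / 2) * H12_seminorm_sq u + ennreal \<alpha> * L2_sq (deriv u)"
    using assms by (intro upwinded_energy_le)
  also have "\<dots> \<le> ennreal (max 1 (\<beta> / 2)) * H12_seminorm_sq u + ennreal (max 1 (\<beta> / 2)) * (ennreal \<alpha> * L2_sq (deriv u))"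
    using mult_right_mono[of "ennreal 1" "ennreal (max 1 (\<beta> / 2))"]
    by (intro add_mono mult_right_mono ennreal_leI) auto
  finally show "ennreal \<alpha> * L2_sq (deriv v) \<le> ennreal (max 1 (\<beta> / 2)) * (H12_seminorm_sq u + ennreal \<alpha> * L2_sq (deriv u))"
    by (simp add: distrib_left)
qed

end
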